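(* Let $(\mathcal{S},\mathcal{A})$ be a finite directed acyclic graph with unique initial state $s_0$ and unique sink state $s_f$. For $i\in\{1,\dots,k\}$ let $p_{i,F}$ be a forward policy on this graph with partition function $Z_i>0$ and reaching probability $u_i$. Let $\omega_1,\dots,\omega_k\ge0$, set $v_i=\omega_iZ_i/\sum_{j=1}^k\omega_jZ_j$, $u_M(s)=\sum_{i=1}^k v_iu_i(s)$, and $$p_{M,F}(s'\mid s)=\sum_{i=1}^k\frac{v_iu_i(s)}{u_M(s)}\,p_{i,F}(s'\mid s)\quad\text{for all } s\in\mathcal{S}\setminus\{s_f\}.$$ Then $u_M$ coincides with the reaching probability induced by $p_{M,F}$: $u_M(s_0)=1$ and $u_M(s)=\sum_{s_*:(s_*\to s)\in\mathcal{A}}u_M(s_* )\,p_{M,F}(s\mid s_* )$ for all $s\in\mathcal{S}\setminus\{s_0\}$.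
   Context: A forward policy $p_F$ assigns to each state $s\neq s_f$ a probability distribution $p_F(\cdot\mid s)$ over the children $s'$ of $s$ (states with $(s\to s')\in\mathcal{A}$). Its reaching probability $u$ is defined by $u(s_0)=1$ and $u(s)=\sum_{s_*:(s_*\to s)\in\mathcal{A}}u(s_* )p_F(s\mid s_* )$ for $s\neq s_0$, i.e. the probability that a trajectory sampled from $p_F$ starting at $s_0$ visits $s$. *)

theory Defs
  imports Complex_Main
begin

definition pointed_dag :: "'a set \<Rightarrow> ('a \<times> 'a) set \<Rightarrow> 'a \<Rightarrow> 'a \<Rightarrow> bool" where
  "pointed_dag S A s0 sf \<longleftrightarrow>
     finite S \<and> A \<subseteq> S \<times> S \<and> acyclic A \<and> s0 \<in> S \<and> sf \<in> S \<and>
     (\<forall>s\<in>S. (\<nexists>s'. (s', s) \<in> A) \<longleftrightarrow> s = s0) \<and>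
     (\<forall>s\<in>S. (\<nexists>s'. (s, s') \<in> A) \<longleftrightarrow> s = sf)"

definition children :: "('a \<times> 'a) set \<Rightarrow> 'a \<Rightarrow> 'a set" where
  "children A s = {s'. (s, s') \<in> A}"

definition parents :: "('a \<times> 'a) set \<Rightarrow> 'a \<Rightarrow> 'a set" where
  "parents A s = {s'. (s', s) \<in> A}"

definition forward_policy :: "'a set \<Rightarrow> ('a \<times> 'a) set \<Rightarrow> 'a \<Rightarrow> ('a \<Rightarrow> 'a \<Rightarrow> real) \<Rightarrow> bool" where
  "forward_policy S A sf p \<longleftrightarrow>
     (\<forall>s\<in>S - {sf}. (\<forall>s'\<in>children A s. 0 \<le> p s s') \<and> (\<Sum>s'\<in>children A s. p s s') = 1)"

definition reaching_prob :: "'a set \<Rightarrow> ('a \<times> 'a) set \<Rightarrow> 'a \<Rightarrow> ('a \<Rightarrow> 'a \<Rightarrow> real) \<Rightarrow> ('a \<Rightarrow> real) \<Rightarrow> bool" where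
  "reaching_prob S A s0 p u \<longleftrightarrow>
     u s0 = 1 \<and> (\<forall>s\<in>S - {s0}. u s = (\<Sum>s'\<in>parents A s. u s' * p s' s))"

end

theory Submission
  imports Defs
begin

text \<open>The normalising factor \<open>u\<^sub>M(s)\<close> in \<open>p\<^sub>M(\<cdot> | s)\<close> cancels against \<open>u\<^sub>M(s)\<close>, so the
  flow \<open>u\<^sub>M(s) p\<^sub>M(s' | s)\<close> is the \<open>v\<close>-mixture of the flows \<open>u\<^sub>i(s) p\<^sub>i(s' | s)\<close>; when
  \<open>u\<^sub>M(s) = 0\<close> this still holds because reaching probabilities are nonnegative, so every
  summand vanishes. The defining recursion is linear in the flows, hence it passes from the
  \<open>u\<^sub>i\<close> to their mixture \<open>u\<^sub>M\<close>, and \<open>u\<^sub>M(s\<^sub>0) = \<Sum> v\<^sub>i = 1\<close>.\<close>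

lemma pointed_dag_wf:
  assumes "pointed_dag S A s0 sf"
  shows "wf A"
proof -
  have "finite A"
    using assms unfolding pointed_dag_def by (meson finite_SigmaI finite_subset)
  then show ?thesis
    using assms finite_acyclic_wf unfolding pointed_dag_def by blast
qed

lemma pointed_dag_parent_nonsink:
  assumes "pointed_dag S A s0 sf" and "y \<in> parents A s"
  shows "y \<in> S - {sf}"
  using assms unfolding pointed_dag_def parents_def by blast

lemma reaching_prob_nonneg:
  assumes dag: "pointed_dag S A s0 sf"
    and pol: "forward_policy S A sf p"
    and reach: "reaching_prob S A s0 p u"
    and "s \<in> S"
  shows "0 \<le> u s"
  using \<open>s \<in> S\<close>
proof (induction s rule: wf_induct_rule[OF pointed_dag_wf[OF dag]])
  case (1 s)
  show ?case
  proof (cases "s = s0")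
    case True
    then show ?thesis using reach unfolding reaching_prob_def by simp
  next
    case False
    have "0 \<le> u y * p y s" if y: "y \<in> parents A s" for y
    proof -
      have "y \<in> S - {sf}" "(y, s) \<in> A"
        using pointed_dag_parent_nonsink[OF dag y] y by (auto simp: parents_def)
      then have "0 \<le> p y s" "0 \<le> u y"
        using pol 1 unfolding forward_policy_def children_def by auto
      then show ?thesis by simp
    qed
    then show ?thesis
      using reach False \<open>s \<in> S\<close> unfolding reaching_prob_def by (simp add: sum_nonneg)
  qed
qed

lemma sum_times_normalized_sum:
  fixes c p :: "'i \<Rightarrow> real"
  assumes "\<And>i. i \<in> I \<Longrightarrow> 0 \<le> c i"
  shows "(\<Sum>i\<in>I. c i) * (\<Sum>i\<in>I. c i / (\<Sum>j\<in>I. c j) * p i) = (\<Sum>i\<in>I. c i * p i)"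
proof (cases "(\<Sum>j\<in>I. c j) = 0")
  case True
  have "(\<Sum>i\<in>I. c i * p i) = 0"
  proof (cases "finite I")
    case True
    with \<open>(\<Sum>j\<in>I. c j) = 0\<close> assms have "\<forall>i\<in>I. c i = 0"
      using sum_nonneg_eq_0_iff by blast
    then show ?thesis by simp
  qed simp
  with True show ?thesis by simp
next
  case False
  then show ?thesis
    by (simp add: sum_distrib_left)
qed

lemma mixture_reaching_prob:
  fixes I :: "'i set" and pF :: "'i \<Rightarrow> 'a \<Rightarrow> 'a \<Rightarrow> real" and u :: "'i \<Rightarrow> 'a \<Rightarrow> real"
  assumes dag: "pointed_dag S A s0 sf"
    and pol: "\<And>i. i \<in> I \<Longrightarrow> forward_policy S A sf (pF i)"
    and reach: "\<And>i. i \<in> I \<Longrightarrow> reaching_prob S A s0 (pF i) (u i)"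
    and v_nonneg: "\<And>i. i \<in> I \<Longrightarrow> 0 \<le> v i"
    and v_sum: "(\<Sum>i\<in>I. v i) = 1"
    and uM: "\<And>s. uM s = (\<Sum>i\<in>I. v i * u i s)"
    and pM: "\<And>s s'. s \<in> S - {sf} \<Longrightarrow> pM s s' = (\<Sum>i\<in>I. v i * u i s / uM s * pF i s s')"
  shows "reaching_prob S A s0 pM uM"
  unfolding reaching_prob_def
proof
  show "uM s0 = 1"
    using reach v_sum unfolding uM reaching_prob_def by simp
  have flow: "uM y * pM y s = (\<Sum>i\<in>I. v i * (u i y * pF i y s))"
    if y: "y \<in> S - {sf}" for y s
  proof -
    have "0 \<le> v i * u i y" if "i \<in> I" for i
      using that y v_nonneg reaching_prob_nonneg[OF dag pol reach] by simp
    from sum_times_normalized_sum[of I "\<lambda>i. v i * u i y" "\<lambda>i. pF i y s", OF this]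
    show ?thesis
      using y unfolding pM[OF y] uM by (simp add: mult.assoc)
  qed
  show "\<forall>s\<in>S - {s0}. uM s = (\<Sum>y\<in>parents A s. uM y * pM y s)"
  proof
    fix s assume s: "s \<in> S - {s0}"
    have "uM s = (\<Sum>i\<in>I. v i * (\<Sum>y\<in>parents A s. u i y * pF i y s))"
      using reach s unfolding uM reaching_prob_def by simp
    also have "\<dots> = (\<Sum>y\<in>parents A s. \<Sum>i\<in>I. v i * (u i y * pF i y s))"
      by (simp add: sum_distrib_left sum.swap[of _ I])
    also have "\<dots> = (\<Sum>y\<in>parents A s. uM y * pM y s)"
      using flow pointed_dag_parent_nonsink[OF dag] by simp
    finally show "uM s = (\<Sum>y\<in>parents A s. uM y * pM y s)" .
  qed
qed

theorem lemmaA2: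
  fixes S :: "'a set" and A :: "('a \<times> 'a) set" and s0 sf :: 'a
    and k :: nat and pF :: "nat \<Rightarrow> 'a \<Rightarrow> 'a \<Rightarrow> real" and u :: "nat \<Rightarrow> 'a \<Rightarrow> real"
    and Z \<omega> v :: "nat \<Rightarrow> real" and uM :: "'a \<Rightarrow> real" and pM :: "'a \<Rightarrow> 'a \<Rightarrow> real"
  assumes dag: "pointed_dag S A s0 sf"
    and pol: "\<forall>i\<in>{1..k}. forward_policy S A sf (pF i)"
    and reach: "\<forall>i\<in>{1..k}. reaching_prob S A s0 (pF i) (u i)"
    and Zpos: "\<forall>i\<in>{1..k}. Z i > 0"
    and \<omega>nn: "\<forall>i\<in>{1..k}. \<omega> i \<ge> 0"
    and nondeg: "(\<Sum>j=1..k. \<omega> j * Z j) > 0"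
    and v_def: "\<forall>i\<in>{1..k}. v i = \<omega> i * Z i / (\<Sum>j=1..k. \<omega> j * Z j)"
    and uM_def: "\<forall>s. uM s = (\<Sum>i=1..k. v i * u i s)"
    and pM_def: "\<forall>s\<in>S - {sf}. \<forall>s'. pM s s' = (\<Sum>i=1..k. v i * u i s / uM s * pF i s s')"
  shows "uM s0 = 1 \<and> (\<forall>s\<in>S - {s0}. uM s = (\<Sum>s'\<in>parents A s. uM s' * pM s' s))"
proof -
  have v_nonneg: "0 \<le> v i" if "i \<in> {1..k}" for i
    using that v_def \<omega>nn Zpos nondeg by (simp add: less_imp_le)
  have "(\<Sum>i=1..k. v i) = (\<Sum>i=1..k. \<omega> i * Z i / (\<Sum>j=1..k. \<omega> j * Z j))"
    using v_def by simp
  also have "\<dots> = (\<Sum>i=1..k. \<omega> i * Z i) / (\<Sum>j=1..k. \<omega> j * Z j)"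
    by (rule sum_divide_distrib[symmetric])
  finally have v_sum: "(\<Sum>i=1..k. v i) = 1"
    using nondeg by simp
  have "reaching_prob S A s0 pM uM"
    using mixture_reaching_prob[OF dag _ _ v_nonneg v_sum] pol reach uM_def pM_def by blast
  then show ?thesis
    unfolding reaching_prob_def .
qed

end
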